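(* Let $m\in\mathbb N$, $m\ge1$, and $\varepsilon>0$. There exists a proper, convex, lower semicontinuous function $g:\mathbb R\to\mathbb R\cup\{+\infty\}$ such that $(\mathrm{abs}*M_{m,\varepsilon})(x)=\min_{y\in\mathbb R}\{\tfrac12(x-y)^2+g(y)\}$ for all $x\in\mathbb R$ if and only if $\varepsilon\ge2M_m(0)$.
   Context: $\mathrm{abs}(x)=|x|$. Centered cardinal B-splines: $M_1=\mathbf 1_{[-1/2,1/2]}$, $M_m=M_1*M_{m-1}$ for $m\ge2$; $M_{m,\varepsilon}(x):=\varepsilon^{-1}M_m(x/\varepsilon)$. The map $x\mapsto\min_y\{\frac12(x-y)^2+g(y)\}$ is the Moreau envelope of $g$. *)

theory Defs
  imports "HOL-Analysis.Analysis"
begin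

definition conv :: "(real \<Rightarrow> real) \<Rightarrow> (real \<Rightarrow> real) \<Rightarrow> real \<Rightarrow> real" where
  "conv f g x = (LINT y|lborel. f y * g (x - y))"

text \<open>Centered cardinal B-splines: bspline m = M_m for m \<ge> 1 (bspline 0 is unused junk).\<close>
fun bspline :: "nat \<Rightarrow> real \<Rightarrow> real" where
  "bspline 0 = (\<lambda>x. 0)"
| "bspline (Suc 0) = indicator {-1/2..1/2}"
| "bspline (Suc (Suc m)) = conv (indicator {-1/2..1/2}) (bspline (Suc m))"

definition bspline_scaled :: "nat \<Rightarrow> real \<Rightarrow> real \<Rightarrow> real" where
  "bspline_scaled m eps x = bspline m (x / eps) / eps"

definition proper_fun :: "(real \<Rightarrow> ereal) \<Rightarrow> bool" where
  "proper_fun g \<longleftrightarrow> (\<forall>y. g y \<noteq> -\<infinity>) \<and> (\<exists>y. g y < \<infinity>)"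

definition convex_fun :: "(real \<Rightarrow> ereal) \<Rightarrow> bool" where
  "convex_fun g \<longleftrightarrow> (\<forall>x y t. 0 \<le> t \<and> t \<le> 1 \<longrightarrow>
      g ((1 - t) * x + t * y) \<le> ereal (1 - t) * g x + ereal t * g y)"

definition lsc_fun :: "(real \<Rightarrow> ereal) \<Rightarrow> bool" where
  "lsc_fun g \<longleftrightarrow> (\<forall>x. g x \<le> Liminf (at x) g)"

definition is_moreau_min :: "(real \<Rightarrow> ereal) \<Rightarrow> real \<Rightarrow> ereal \<Rightarrow> bool" where
  "is_moreau_min g x v \<longleftrightarrow>
     (\<exists>y0. v = ereal ((x - y0)^2 / 2) + g y0) \<and> (\<forall>y. v \<le> ereal ((x - y)^2 / 2) + g y)"

end

theory Submission
  imports Defs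
begin

text \<open>
  A Moreau envelope f of any g satisfies f(x + h) + f(x - h) - 2 f(x) \<le> h^2, since the minimiser
  for x is a competitor at x \<plusminus> h. Conversely, if f has slopes s with
  f w + s w (z - w) \<le> f z \<le> f w + s w (z - w) + (z - w)^2/2, then f is the Moreau envelope of
  the proper convex lsc function g = sup_w (f w + s w (\<cdot> - w) + (s w)^2/2), the minimum at x
  being attained at x - s x.
  For a bounded compactly supported kernel M \<ge> 0, F = |\<cdot>| * M has slopes sgn * M and F'' = 2M,
  so the quadratic upper bound holds as soon as M \<le> 1/2, whereas M > 1/2 near a point makes the
  second difference of F there exceed h^2. Finally M_{m,\<epsilon>} is continuous and maximal at 0, where
  it equals M_m(0)/\<epsilon>, because convolution with the box M_1 preserves evenness and monotonicity
  in |x|.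
\<close>

lemma convex_1_smooth_is_moreau_envelope:
  fixes f s :: "real \<Rightarrow> real"
  assumes subgradient: "\<And>z w. f w + s w * (z - w) \<le> f z"
    and smooth: "\<And>z x. f z \<le> f x + s x * (z - x) + (z - x)^2 / 2"
  shows "\<exists>g. proper_fun g \<and> convex_fun g \<and> lsc_fun g \<and> (\<forall>x. is_moreau_min g x (ereal (f x)))"
proof -
  define t where "t w y = f w + s w * (y - w) + (s w)^2 / 2" for w y
  define g where "g y = (SUP w. ereal (t w y))" for y
  have t_le_g: "ereal (t w y) \<le> g y" for w y
    unfolding g_def by (rule SUP_upper) simp
  have t_at_prox: "t w (x - s x) \<le> f x - (s x)^2 / 2" for w x
  proof -
    define z where "z = x - s x + s w"
    have "f w + s w * (z - w) \<le> f x + s x * (z - x) + (z - x)^2 / 2"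
      using subgradient[of w z] smooth[of z x] by linarith
    then show ?thesis
      unfolding t_def z_def by (simp add: power2_eq_square field_simps)
  qed
  have g_at_prox: "g (x - s x) = ereal (f x - (s x)^2 / 2)" for x
  proof (rule antisym)
    show "g (x - s x) \<le> ereal (f x - (s x)^2 / 2)"
      unfolding g_def by (rule SUP_least) (use t_at_prox in simp)
    have "t x (x - s x) = f x - (s x)^2 / 2"
      unfolding t_def by (simp add: power2_eq_square algebra_simps)
    then show "ereal (f x - (s x)^2 / 2) \<le> g (x - s x)"
      using t_le_g[of x "x - s x"] by simp
  qed
  have "proper_fun g"
    unfolding proper_fun_def
  proof
    show "\<forall>y. g y \<noteq> - \<infinity>"
      using t_le_g[of 0] by (metis MInfty_neq_ereal(1) ereal_infty_less_eq(2))
    show "\<exists>y. g y < \<infinity>"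
      using g_at_prox[of 0] by (intro exI[of _ "0 - s 0"]) simp
  qed
  moreover have "convex_fun g"
    unfolding convex_fun_def
  proof (intro allI impI)
    fix x y \<theta> :: real
    assume \<theta>: "0 \<le> \<theta> \<and> \<theta> \<le> 1"
    show "g ((1 - \<theta>) * x + \<theta> * y) \<le> ereal (1 - \<theta>) * g x + ereal \<theta> * g y"
      unfolding g_def[of "(1 - \<theta>) * x + \<theta> * y"]
    proof (rule SUP_least)
      fix w
      have "ereal (t w ((1 - \<theta>) * x + \<theta> * y)) = ereal (1 - \<theta>) * ereal (t w x) + ereal \<theta> * ereal (t w y)"
        unfolding t_def by (simp add: field_simps)
      also have "\<dots> \<le> ereal (1 - \<theta>) * g x + ereal \<theta> * g y"
        using \<theta> by (intro add_mono ereal_mult_left_mono t_le_g) auto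
      finally show "ereal (t w ((1 - \<theta>) * x + \<theta> * y)) \<le> ereal (1 - \<theta>) * g x + ereal \<theta> * g y" .
    qed
  qed
  moreover have "lsc_fun g"
    unfolding lsc_fun_def
  proof
    fix x
    show "g x \<le> Liminf (at x) g"
      unfolding g_def[of x]
    proof (rule SUP_least)
      fix w
      have "((\<lambda>y. ereal (t w y)) \<longlongrightarrow> ereal (t w x)) (at x)"
        unfolding t_def by (intro tendsto_intros)
      then have "ereal (t w x) = Liminf (at x) (\<lambda>y. ereal (t w y))"
        by (intro lim_imp_Liminf[symmetric]) auto
      also have "\<dots> \<le> Liminf (at x) g"
        by (rule Liminf_mono) (use t_le_g in auto)
      finally show "ereal (t w x) \<le> Liminf (at x) g" .
    qed
  qed
  moreover have "is_moreau_min g x (ereal (f x))" for x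
    unfolding is_moreau_min_def
  proof
    show "\<exists>y0. ereal (f x) = ereal ((x - y0)^2 / 2) + g y0"
      by (rule exI[of _ "x - s x"]) (simp add: g_at_prox)
    show "\<forall>y. ereal (f x) \<le> ereal ((x - y)^2 / 2) + g y"
    proof
      fix y
      have "(x - y)^2 / 2 + t x y - f x = (y - x + s x)^2 / 2"
        unfolding t_def power2_eq_square by (simp add: field_simps)
      moreover have "0 \<le> (y - x + s x)^2 / 2"
        by simp
      ultimately have "f x \<le> (x - y)^2 / 2 + t x y"
        by linarith
      then have "ereal (f x) \<le> ereal ((x - y)^2 / 2) + ereal (t x y)"
        by simp
      also have "\<dots> \<le> ereal ((x - y)^2 / 2) + g y"
        by (intro add_left_mono t_le_g)
      finally show "ereal (f x) \<le> ereal ((x - y)^2 / 2) + g y" .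
    qed
  qed
  ultimately show ?thesis by blast
qed

lemma moreau_envelope_second_difference_le:
  fixes f :: "real \<Rightarrow> real"
  assumes "\<forall>x. is_moreau_min g x (ereal (f x))"
  shows "f (x + h) + f (x - h) - 2 * f x \<le> h^2"
proof -
  obtain y0 where "ereal (f x) = ereal ((x - y0)^2 / 2) + g y0"
    using assms unfolding is_moreau_min_def by blast
  then have g_y0: "g y0 = ereal (f x - (x - y0)^2 / 2)"
    by (cases "g y0") auto
  have "ereal (f z) \<le> ereal ((z - y0)^2 / 2) + g y0" for z
    using assms unfolding is_moreau_min_def by blast
  then have "f z \<le> (z - y0)^2 / 2 + (f x - (x - y0)^2 / 2)" for z
    unfolding g_y0 by simp
  from this[of "x + h"] this[of "x - h"] show ?thesis
    by (simp add: power2_eq_square field_simps)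
qed

lemma integral_Icc_right_distance:
  fixes a b :: real
  assumes "a \<le> b"
  shows "integral {a..b} (\<lambda>u. b - u) = (b - a)^2 / 2"
proof -
  have "((\<lambda>u. b - u) has_integral (b * b - b^2/2) - (b * a - a^2/2)) {a..b}"
    by (rule fundamental_theorem_of_calculus[OF assms])
       (auto intro!: derivative_eq_intros simp: has_real_derivative_iff_has_vector_derivative[symmetric])
  then show ?thesis by (simp add: integral_unique power2_eq_square field_simps)
qed

lemma integral_Icc_left_distance:
  fixes a b :: real
  assumes "a \<le> b"
  shows "integral {a..b} (\<lambda>u. u - a) = (b - a)^2 / 2"
proof -
  have "((\<lambda>u. u - a) has_integral (b^2/2 - a * b) - (a^2/2 - a * a)) {a..b}"
    by (rule fundamental_theorem_of_calculus[OF assms])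
       (auto intro!: derivative_eq_intros simp: has_real_derivative_iff_has_vector_derivative[symmetric])
  then show ?thesis by (simp add: integral_unique power2_eq_square field_simps)
qed

lemma integral_segment_distance:
  fixes x z :: real
  shows "integral {min x z..max x z} (\<lambda>u. \<bar>z - u\<bar>) = (z - x)^2 / 2"
proof (cases "x \<le> z")
  case True
  have "integral {x..z} (\<lambda>u. \<bar>z - u\<bar>) = integral {x..z} (\<lambda>u. z - u)"
    by (rule integral_cong) auto
  then show ?thesis
    using True integral_Icc_right_distance[of x z] by simp
next
  case False
  have "integral {z..x} (\<lambda>u. \<bar>z - u\<bar>) = integral {z..x} (\<lambda>u. u - z)"
    by (rule integral_cong) auto
  then show ?thesis
    using False integral_Icc_left_distance[of z x] by (simp add: power2_commute)
qed

lemma integral_tent: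
  fixes x h :: real
  assumes "0 \<le> h"
  shows "integral {x - h..x + h} (\<lambda>u. h - \<bar>x - u\<bar>) = h^2"
proof -
  have int: "(\<lambda>u. h - \<bar>x - u\<bar>) integrable_on {x - h..x + h}"
    by (intro integrable_continuous_interval continuous_intros)
  have "integral {x - h..x} (\<lambda>u. h - \<bar>x - u\<bar>) = integral {x - h..x} (\<lambda>u. u - (x - h))"
    by (rule integral_cong) auto
  moreover have "integral {x..x + h} (\<lambda>u. h - \<bar>x - u\<bar>) = integral {x..x + h} (\<lambda>u. (x + h) - u)"
    by (rule integral_cong) auto
  ultimately show ?thesis
    using Henstock_Kurzweil_Integration.integral_combine[OF _ _ int, of x] integral_Icc_left_distance[of "x - h" x]
      integral_Icc_right_distance[of x "x + h"] assms
    by (simp add: power2_eq_square)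
qed

lemma lborel_integral_indicator_Icc:
  fixes f :: "real \<Rightarrow> real"
  assumes "continuous_on {a..b} f"
  shows "integrable lborel (\<lambda>u. indicator {a..b} u *\<^sub>R f u)"
    and "(\<integral>u. indicator {a..b} u *\<^sub>R f u \<partial>lborel) = integral {a..b} f"
  using borel_integrable_atLeastAtMost'[OF assms]
    set_borel_integral_eq_integral(2)[OF borel_integrable_atLeastAtMost'[OF assms]]
  by (simp_all add: set_integrable_def set_lebesgue_integral_def)

lemma conv_eq_integral_reflect: "conv f g x = (\<integral>u. f (x - u) * g u \<partial>lborel)"
proof -
  have "conv f g x = (\<integral>u. f (x + -1 * u) * g (x - (x + -1 * u)) \<partial>lborel)"
    unfolding conv_def by (subst lborel_integral_real_affine[where c="-1" and t=x]) simp_all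
  then show ?thesis by simp
qed

context
  fixes M :: "real \<Rightarrow> real" and K R :: real
  assumes M_measurable: "M \<in> borel_measurable borel"
    and M_nonneg: "\<And>u. 0 \<le> M u"
    and M_le: "\<And>u. M u \<le> K"
    and M_support: "\<And>u. R < \<bar>u\<bar> \<Longrightarrow> M u = 0"
begin

lemma integrable_mult_kernel:
  assumes "w \<in> borel_measurable borel" and "\<And>u. \<bar>u\<bar> \<le> R \<Longrightarrow> \<bar>w u\<bar> \<le> C"
  shows "integrable lborel (\<lambda>u. w u * M u)"
proof (rule Bochner_Integration.integrable_bound[where f="\<lambda>u. \<bar>C\<bar> * K * indicator {-R..R} u"])
  show "integrable lborel (\<lambda>u. \<bar>C\<bar> * K * indicator {-R..R} u :: real)"
    by (intro integrable_mult_right) (auto intro!: integrable_real_indicator simp: emeasure_lborel_Icc_eq)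
  show "(\<lambda>u. w u * M u) \<in> borel_measurable lborel"
    using assms(1) M_measurable by simp
  have "norm (w u * M u) \<le> norm (\<bar>C\<bar> * K * indicator {-R..R} u :: real)" for u
  proof (cases "\<bar>u\<bar> \<le> R")
    case True
    have "\<bar>w u\<bar> * M u \<le> \<bar>C\<bar> * K"
      by (rule mult_mono) (use assms(2)[OF True] M_le M_nonneg in auto)
    moreover have "0 \<le> K"
      using M_nonneg[of u] M_le[of u] by linarith
    ultimately show ?thesis
      using True M_nonneg[of u] by (auto simp: indicator_def abs_mult)
  qed (simp add: M_support)
  then show "AE u in lborel. norm (w u * M u) \<le> norm (\<bar>C\<bar> * K * indicator {-R..R} u :: real)"
    by simp
qed

lemma integrable_abs_kernel: "integrable lborel (\<lambda>u. \<bar>x - u\<bar> * M u)"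
  by (rule integrable_mult_kernel[where C="\<bar>x\<bar> + R"]) auto

lemma integrable_sgn_kernel: "integrable lborel (\<lambda>u. sgn (x - u) * M u)"
  by (rule integrable_mult_kernel[where C=1]) (auto simp: sgn_if)

lemma conv_abs_linearization_error:
  shows "integrable lborel (\<lambda>u. (\<bar>z - u\<bar> - \<bar>w - u\<bar> - sgn (w - u) * (z - w)) * M u)"
    and "(\<integral>u. (\<bar>z - u\<bar> - \<bar>w - u\<bar> - sgn (w - u) * (z - w)) * M u \<partial>lborel) =
           conv abs M z - conv abs M w - conv sgn M w * (z - w)"
proof -
  have expand: "(\<lambda>u. (\<bar>z - u\<bar> - \<bar>w - u\<bar> - sgn (w - u) * (z - w)) * M u) =
      (\<lambda>u. \<bar>z - u\<bar> * M u - \<bar>w - u\<bar> * M u - (z - w) * (sgn (w - u) * M u))"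
    by (simp add: fun_eq_iff algebra_simps)
  show "integrable lborel (\<lambda>u. (\<bar>z - u\<bar> - \<bar>w - u\<bar> - sgn (w - u) * (z - w)) * M u)"
    unfolding expand using integrable_abs_kernel integrable_sgn_kernel by simp
  show "(\<integral>u. (\<bar>z - u\<bar> - \<bar>w - u\<bar> - sgn (w - u) * (z - w)) * M u \<partial>lborel) =
      conv abs M z - conv abs M w - conv sgn M w * (z - w)"
    unfolding expand conv_eq_integral_reflect using integrable_abs_kernel integrable_sgn_kernel
    by (simp add: mult.commute)
qed

lemma conv_abs_subgradient: "conv abs M w + conv sgn M w * (z - w) \<le> conv abs M z"
proof -
  have "0 \<le> (\<integral>u. (\<bar>z - u\<bar> - \<bar>w - u\<bar> - sgn (w - u) * (z - w)) * M u \<partial>lborel)"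
    by (intro Bochner_Integration.integral_nonneg mult_nonneg_nonneg M_nonneg)
       (auto simp: sgn_if abs_if algebra_simps)
  then show ?thesis
    unfolding conv_abs_linearization_error(2) by simp
qed

lemma conv_abs_le_quadratic_model:
  assumes "\<And>u. M u \<le> L"
  shows "conv abs M z \<le> conv abs M x + conv sgn M x * (z - x) + L * (z - x)^2"
proof -
  define k where "k u = \<bar>z - u\<bar> - \<bar>x - u\<bar> - sgn (x - u) * (z - x)" for u
  define b where "b u = indicator {min x z..max x z} u *\<^sub>R (2 * L * \<bar>z - u\<bar>)" for u
  have cont: "continuous_on {min x z..max x z} (\<lambda>u. 2 * L * \<bar>z - u\<bar>)"
    by (intro continuous_intros)
  have b_integral: "integrable lborel b" "integral\<^sup>L lborel b = L * (z - x)^2"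
    unfolding b_def lborel_integral_indicator_Icc[OF cont]
    using lborel_integral_indicator_Icc(1)[OF cont] integral_segment_distance[of x z]
    by (simp_all add: Henstock_Kurzweil_Integration.integral_mult_right)
  have "k u * M u \<le> b u" for u
  proof -
    \<comment> \<open>k vanishes outside the segment between x and z and equals 2 |z - u| inside it\<close>
    have "0 \<le> k u" "k u \<le> 2 * indicator {min x z..max x z} u * \<bar>z - u\<bar>"
      unfolding k_def by (auto simp: sgn_if abs_if indicator_def)
    moreover have "0 \<le> L"
      using M_nonneg[of u] assms[of u] by linarith
    ultimately have "k u * M u \<le> 2 * indicator {min x z..max x z} u * \<bar>z - u\<bar> * L"
      using assms[of u] by (meson mult_mono M_nonneg order_trans)
    then show ?thesis
      unfolding b_def by (simp add: ac_simps)
  qed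
  moreover have "integrable lborel (\<lambda>u. k u * M u)"
    unfolding k_def by (rule conv_abs_linearization_error(1))
  ultimately have "(\<integral>u. k u * M u \<partial>lborel) \<le> L * (z - x)^2"
    using integral_mono[of lborel "\<lambda>u. k u * M u" b] b_integral by simp
  then show ?thesis
    unfolding k_def conv_abs_linearization_error(2) by simp
qed

lemma conv_abs_second_difference_ge:
  assumes "0 \<le> h" and "\<And>u. \<bar>x - u\<bar> \<le> h \<Longrightarrow> c \<le> M u"
  shows "2 * c * h^2 \<le> conv abs M (x + h) + conv abs M (x - h) - 2 * conv abs M x"
proof -
  define k where "k u = \<bar>x + h - u\<bar> + \<bar>x - h - u\<bar> - 2 * \<bar>x - u\<bar>" for u
  define tent where "tent u = indicator {x - h..x + h} u *\<^sub>R (2 * c * (h - \<bar>x - u\<bar>))" for u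
  have cont: "continuous_on {x - h..x + h} (\<lambda>u. 2 * c * (h - \<bar>x - u\<bar>))"
    by (intro continuous_intros)
  have tent_integral: "integrable lborel tent" "integral\<^sup>L lborel tent = 2 * c * h^2"
    unfolding tent_def lborel_integral_indicator_Icc[OF cont]
    using lborel_integral_indicator_Icc(1)[OF cont] integral_tent[OF assms(1), of x]
    by (simp_all add: Henstock_Kurzweil_Integration.integral_mult_right)
  have k_expand: "(\<lambda>u. k u * M u) = (\<lambda>u. \<bar>x + h - u\<bar> * M u + \<bar>x - h - u\<bar> * M u - 2 * (\<bar>x - u\<bar> * M u))"
    unfolding k_def by (simp add: fun_eq_iff algebra_simps)
  have k_integrable: "integrable lborel (\<lambda>u. k u * M u)"
    unfolding k_expand using integrable_abs_kernel by simp
  have "tent u \<le> k u * M u" for u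
  proof (cases "\<bar>x - u\<bar> \<le> h")
    case True
    then have "k u = 2 * (h - \<bar>x - u\<bar>)" "u \<in> {x - h..x + h}"
      unfolding k_def by auto
    moreover have "2 * (h - \<bar>x - u\<bar>) * c \<le> 2 * (h - \<bar>x - u\<bar>) * M u"
      by (rule mult_left_mono) (use True assms(2)[OF True] in auto)
    ultimately show ?thesis
      unfolding tent_def by (simp add: ac_simps)
  next
    case False
    have "0 \<le> k u"
      unfolding k_def by (simp add: abs_if)
    moreover have "u \<notin> {x - h..x + h}"
      using False by auto
    ultimately show ?thesis
      unfolding tent_def using M_nonneg[of u] by simp
  qed
  then have "2 * c * h^2 \<le> (\<integral>u. k u * M u \<partial>lborel)"
    using integral_mono[of lborel tent "\<lambda>u. k u * M u"] tent_integral k_integrable by simp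
  also have "\<dots> = conv abs M (x + h) + conv abs M (x - h) - 2 * conv abs M x"
    unfolding k_expand conv_eq_integral_reflect using integrable_abs_kernel by simp
  finally show ?thesis .
qed

lemma conv_abs_is_moreau_envelope_iff:
  assumes "isCont M x0" and "\<And>u. M u \<le> M x0"
  shows "(\<exists>g. proper_fun g \<and> convex_fun g \<and> lsc_fun g \<and>
            (\<forall>x. is_moreau_min g x (ereal (conv abs M x)))) \<longleftrightarrow> M x0 \<le> 1/2"
proof
  assume "\<exists>g. proper_fun g \<and> convex_fun g \<and> lsc_fun g \<and>
            (\<forall>x. is_moreau_min g x (ereal (conv abs M x)))"
  then obtain g where envelope: "\<forall>x. is_moreau_min g x (ereal (conv abs M x))"
    by blast
  show "M x0 \<le> 1/2"
  proof (rule ccontr)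
    assume "\<not> M x0 \<le> 1/2"
    then obtain c where c: "1/2 < c" "c < M x0"
      using dense[of "1/2" "M x0"] by auto
    obtain d where d: "0 < d" "\<And>u. dist u x0 < d \<Longrightarrow> c < M u"
      using order_tendstoD(1)[OF assms(1)[unfolded isCont_def] c(2)] c(2)
      unfolding eventually_at by (metis UNIV_I)
    define h where "h = d / 2"
    have "0 < h"
      using d(1) unfolding h_def by simp
    have near: "c \<le> M u" if "\<bar>x0 - u\<bar> \<le> h" for u
    proof -
      have "dist u x0 < d"
        using that d(1) unfolding h_def dist_real_def by (simp add: abs_minus_commute)
      then show ?thesis
        using d(2) by (simp add: less_imp_le)
    qed
    have "2 * c * h^2 \<le> conv abs M (x0 + h) + conv abs M (x0 - h) - 2 * conv abs M x0"
      using \<open>0 < h\<close> near by (intro conv_abs_second_difference_ge) auto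
    also have "\<dots> \<le> h^2"
      by (rule moreau_envelope_second_difference_le[OF envelope])
    finally have "2 * c * h^2 \<le> h^2" .
    moreover have "1 * h^2 < (2 * c) * h^2"
      by (rule mult_strict_right_mono) (use c(1) \<open>0 < h\<close> in auto)
    ultimately show False
      by simp
  qed
next
  assume "M x0 \<le> 1/2"
  then have "\<And>u. M u \<le> 1/2"
    using assms(2) order_trans by blast
  then show "\<exists>g. proper_fun g \<and> convex_fun g \<and> lsc_fun g \<and>
      (\<forall>x. is_moreau_min g x (ereal (conv abs M x)))"
  proof (intro convex_1_smooth_is_moreau_envelope)
    show "conv abs M w + conv sgn M w * (z - w) \<le> conv abs M z" for z w
      by (rule conv_abs_subgradient)
    show "conv abs M z \<le> conv abs M x + conv sgn M x * (z - x) + (z - x)^2 / 2" for z x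
      using conv_abs_le_quadratic_model[of "1/2" z x] \<open>\<And>u. M u \<le> 1/2\<close> by simp
  qed
qed

end

definition symmetric_decreasing_bump :: "real \<Rightarrow> (real \<Rightarrow> real) \<Rightarrow> bool" where
  "symmetric_decreasing_bump k B \<longleftrightarrow> B \<in> borel_measurable borel \<and> (\<forall>x. 0 \<le> B x \<and> B x \<le> 1) \<and>
     (\<forall>x. k < \<bar>x\<bar> \<longrightarrow> B x = 0) \<and> (\<forall>x x'. \<bar>x\<bar> \<le> \<bar>x'\<bar> \<longrightarrow> B x' \<le> B x)"

definition box_average :: "(real \<Rightarrow> real) \<Rightarrow> real \<Rightarrow> real" where
  "box_average B x = integral {x - 1/2..x + 1/2} B"

context
  fixes B :: "real \<Rightarrow> real" and k :: real
  assumes B_measurable: "B \<in> borel_measurable borel"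
    and B_nonneg: "\<And>x. 0 \<le> B x" and B_le_1: "\<And>x. B x \<le> 1"
    and B_support: "\<And>x. k < \<bar>x\<bar> \<Longrightarrow> B x = 0"
    and B_decreasing: "\<And>x x'. \<bar>x\<bar> \<le> \<bar>x'\<bar> \<Longrightarrow> B x' \<le> B x"
begin

lemma bump_set_integrable_Icc: "set_integrable lborel {a..b} B"
  unfolding set_integrable_def
proof (rule Bochner_Integration.integrable_bound[where f="indicator {a..b} :: real \<Rightarrow> real"])
  show "integrable lborel (indicator {a..b} :: real \<Rightarrow> real)"
    by (auto intro!: integrable_real_indicator simp: emeasure_lborel_Icc_eq)
  show "(\<lambda>x. indicator {a..b} x *\<^sub>R B x) \<in> borel_measurable lborel"
    using B_measurable by simp
  show "AE x in lborel. norm (indicator {a..b} x *\<^sub>R B x) \<le> norm (indicator {a..b} x :: real)"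
    using B_nonneg B_le_1 by (auto simp: indicator_def)
qed

lemma bump_integrable_on_Icc: "B integrable_on {a..b}"
  using set_borel_integral_eq_integral(1)[OF bump_set_integrable_Icc] .

lemma bump_integral_Icc_split: "a \<le> b \<Longrightarrow> b \<le> c \<Longrightarrow> integral {a..c} B = integral {a..b} B + integral {b..c} B"
  using Henstock_Kurzweil_Integration.integral_combine[OF _ _ bump_integrable_on_Icc] by simp

lemma bump_integral_Icc_bounds:
  assumes "a \<le> b"
  shows "0 \<le> integral {a..b} B" and "integral {a..b} B \<le> b - a"
proof -
  show "0 \<le> integral {a..b} B"
    by (rule Henstock_Kurzweil_Integration.integral_nonneg[OF bump_integrable_on_Icc]) (use B_nonneg in auto)
  have "integral {a..b} B \<le> integral {a..b} (\<lambda>_. 1::real)"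
    by (rule integral_le[OF bump_integrable_on_Icc]) (use B_le_1 in auto)
  then show "integral {a..b} B \<le> b - a"
    using assms by simp
qed

lemma conv_box_eq_box_average: "conv (indicator {-1/2..1/2}) B = box_average B"
proof
  fix x
  have "conv (indicator {-1/2..1/2}) B x = (\<integral>u. indicator {x - 1/2..x + 1/2} u *\<^sub>R B u \<partial>lborel)"
    unfolding conv_eq_integral_reflect by (rule Bochner_Integration.integral_cong) (auto simp: indicator_def)
  also have "\<dots> = box_average B x"
    using set_borel_integral_eq_integral(2)[OF bump_set_integrable_Icc]
    unfolding set_lebesgue_integral_def box_average_def .
  finally show "conv (indicator {-1/2..1/2}) B x = box_average B x" .
qed

lemma box_average_difference:
  assumes "x \<le> y"
  shows "box_average B y - box_average B x = integral {x + 1/2..y + 1/2} B - integral {x - 1/2..y - 1/2} B"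
  using bump_integral_Icc_split[of "x - 1/2" "x + 1/2" "y + 1/2"] bump_integral_Icc_split[of "x - 1/2" "y - 1/2" "y + 1/2"]
    assms unfolding box_average_def by simp

lemma box_average_lipschitz: "\<bar>box_average B y - box_average B x\<bar> \<le> \<bar>y - x\<bar>"
proof -
  have "\<bar>box_average B y - box_average B x\<bar> \<le> y - x" if "x \<le> y" for x y
    using box_average_difference[OF that] bump_integral_Icc_bounds[of "x + 1/2" "y + 1/2"]
      bump_integral_Icc_bounds[of "x - 1/2" "y - 1/2"] that by simp
  from this[of x y] this[of y x] show ?thesis
    by (cases "x \<le> y") (auto simp: abs_minus_commute)
qed

lemma continuous_on_box_average: "continuous_on UNIV (box_average B)"
proof (rule lipschitz_on_continuous_on)
  show "1-lipschitz_on UNIV (box_average B)"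
    using box_average_lipschitz by (intro lipschitz_onI) (auto simp: dist_real_def)
qed

lemma box_average_bounds: "0 \<le> box_average B x" "box_average B x \<le> 1"
  using bump_integral_Icc_bounds[of "x - 1/2" "x + 1/2"] unfolding box_average_def by auto

lemma box_average_support:
  assumes "k + 1 < \<bar>x\<bar>"
  shows "box_average B x = 0"
proof -
  have "box_average B x = integral {x - 1/2..x + 1/2} (\<lambda>_. 0::real)"
    unfolding box_average_def using assms by (intro integral_cong B_support) auto
  then show ?thesis
    by simp
qed

lemma box_average_even: "box_average B (-x) = box_average B x"
proof -
  have B_even: "B (-u) = B u" for u
    using B_decreasing[of u "-u"] B_decreasing[of "-u" u] by simp
  have "box_average B (-x) = integral {-(x + 1/2)..-(x - 1/2)} (\<lambda>u. B (-u))"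
    unfolding box_average_def by (simp add: B_even)
  also have "\<dots> = box_average B x"
    using Henstock_Kurzweil_Integration.integral_reflect_real[of "x + 1/2" "x - 1/2" B]
    unfolding box_average_def by simp
  finally show ?thesis .
qed

lemma box_average_decreasing_nonneg:
  assumes "0 \<le> x" and "x \<le> y"
  shows "box_average B y \<le> box_average B x"
proof -
  have shift: "integral {a..y - x + a} B = integral {0..y - x} (B \<circ> (+) a)"
    and shift_integrable: "(B \<circ> (+) a) integrable_on {0..y - x}" for a
    using integral_shift_Icc_real[of 0 "y - x" B a]
      integrable_on_shift_cbox[of B a 0 "y - x"] bump_integrable_on_Icc by simp_all
  have "integral {0..y - x} (B \<circ> (+) (x + 1/2)) \<le> integral {0..y - x} (B \<circ> (+) (x - 1/2))"
  proof (rule integral_le[OF shift_integrable shift_integrable])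
    fix s
    assume "s \<in> {0..y - x}"
    then have "\<bar>x - 1/2 + s\<bar> \<le> \<bar>x + 1/2 + s\<bar>"
      using assms by auto
    then show "(B \<circ> (+) (x + 1/2)) s \<le> (B \<circ> (+) (x - 1/2)) s"
      by (simp add: B_decreasing)
  qed
  then show ?thesis
    using box_average_difference[OF assms(2)] shift[of "x + 1/2"] shift[of "x - 1/2"]
    by (simp add: algebra_simps)
qed

lemma box_average_decreasing: "\<bar>x\<bar> \<le> \<bar>x'\<bar> \<Longrightarrow> box_average B x' \<le> box_average B x"
  using box_average_decreasing_nonneg[of "\<bar>x\<bar>" "\<bar>x'\<bar>"] box_average_even[of x] box_average_even[of x']
  by (cases "0 \<le> x"; cases "0 \<le> x'") auto

end

lemma symmetric_decreasing_bump_box_average: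
  assumes "symmetric_decreasing_bump k B"
  shows "symmetric_decreasing_bump (k + 1) (box_average B)"
    and "conv (indicator {-1/2..1/2}) B = box_average B"
    and "continuous_on UNIV (box_average B)"
proof -
  have B: "B \<in> borel_measurable borel" "\<And>x. 0 \<le> B x" "\<And>x. B x \<le> 1"
    "\<And>x. k < \<bar>x\<bar> \<Longrightarrow> B x = 0" "\<And>x x'. \<bar>x\<bar> \<le> \<bar>x'\<bar> \<Longrightarrow> B x' \<le> B x"
    using assms unfolding symmetric_decreasing_bump_def by auto
  show continuous: "continuous_on UNIV (box_average B)"
    by (rule continuous_on_box_average[OF B])
  show "conv (indicator {-1/2..1/2}) B = box_average B"
    by (rule conv_box_eq_box_average[OF B])
  show "symmetric_decreasing_bump (k + 1) (box_average B)"
    unfolding symmetric_decreasing_bump_def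
    using borel_measurable_continuous_onI[OF continuous] box_average_bounds[OF B]
      box_average_support[OF B] box_average_decreasing[OF B] by auto
qed

lemma bspline_symmetric_decreasing_bump: "symmetric_decreasing_bump (Suc n) (bspline (Suc n))"
proof (induction n)
  case 0
  show ?case
    by (auto simp: symmetric_decreasing_bump_def indicator_def)
next
  case (Suc n)
  then show ?case
    using symmetric_decreasing_bump_box_average[OF Suc.IH] by (simp add: add.commute)
qed

lemma isCont_bspline_0: "isCont (bspline (Suc n)) 0"
proof (cases n)
  case 0
  have "\<forall>\<^sub>F x in nhds 0. x \<in> {-1/2<..<1/2::real}"
    by (rule eventually_nhds_in_open) auto
  then have "\<forall>\<^sub>F x in nhds 0. bspline (Suc n) x = 1"
    by (rule eventually_mono) (simp add: 0)
  then show ?thesis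
    by (simp add: isCont_cong)
next
  case (Suc n')
  then show ?thesis
    using symmetric_decreasing_bump_box_average(2,3)[OF bspline_symmetric_decreasing_bump[of n']]
    by (simp add: continuous_on_eq_continuous_at)
qed

lemma bspline_scaled_kernel:
  assumes "0 < eps"
  shows "bspline_scaled (Suc n) eps \<in> borel_measurable borel"
    and "\<And>u. 0 \<le> bspline_scaled (Suc n) eps u"
    and "\<And>u. bspline_scaled (Suc n) eps u \<le> 1 / eps"
    and "\<And>u. real (Suc n) * eps < \<bar>u\<bar> \<Longrightarrow> bspline_scaled (Suc n) eps u = 0"
    and "isCont (bspline_scaled (Suc n) eps) 0"
    and "\<And>u. bspline_scaled (Suc n) eps u \<le> bspline_scaled (Suc n) eps 0"
proof -
  have B: "bspline (Suc n) \<in> borel_measurable borel" "\<And>x. 0 \<le> bspline (Suc n) x"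
    "\<And>x. bspline (Suc n) x \<le> 1" "\<And>x. real (Suc n) < \<bar>x\<bar> \<Longrightarrow> bspline (Suc n) x = 0"
    "\<And>x x'. \<bar>x\<bar> \<le> \<bar>x'\<bar> \<Longrightarrow> bspline (Suc n) x' \<le> bspline (Suc n) x"
    using bspline_symmetric_decreasing_bump[of n] unfolding symmetric_decreasing_bump_def by auto
  have scaled: "bspline_scaled (Suc n) eps = (\<lambda>u. bspline (Suc n) (u / eps) / eps)"
    unfolding bspline_scaled_def ..
  show "bspline_scaled (Suc n) eps \<in> borel_measurable borel"
    unfolding scaled using B(1) by measurable
  show "0 \<le> bspline_scaled (Suc n) eps u" for u
    unfolding scaled using B(2) assms by simp
  show "bspline_scaled (Suc n) eps u \<le> 1 / eps" for u
    unfolding scaled using B(3) assms by (simp add: divide_right_mono)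
  show "bspline_scaled (Suc n) eps u = 0" if "real (Suc n) * eps < \<bar>u\<bar>" for u
    unfolding scaled using B(4)[of "u / eps"] that assms by (simp add: field_simps)
  show "isCont (bspline_scaled (Suc n) eps) 0"
    unfolding scaled using isCont_bspline_0[of n] assms
    by (auto intro!: continuous_intros isCont_o2[where f="\<lambda>u. u / eps" and g="bspline (Suc n)"])
  show "bspline_scaled (Suc n) eps u \<le> bspline_scaled (Suc n) eps 0" for u
    unfolding scaled using B(5)[of 0 "u / eps"] assms by (simp add: divide_right_mono)
qed

theorem mainTheorem15:
  fixes m :: nat and eps :: real
  assumes "m \<ge> 1" and "eps > 0"
  shows "(\<exists>g :: real \<Rightarrow> ereal. proper_fun g \<and> convex_fun g \<and> lsc_fun g \<and>
            (\<forall>x. is_moreau_min g x (ereal (conv abs (bspline_scaled m eps) x))))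
         \<longleftrightarrow> eps \<ge> 2 * bspline m 0"
proof -
  obtain n where m: "m = Suc n"
    using assms(1) by (cases m) auto
  have "bspline_scaled m eps 0 \<le> 1/2 \<longleftrightarrow> eps \<ge> 2 * bspline m 0"
    using assms(2) by (simp add: bspline_scaled_def field_simps)
  then show ?thesis
    unfolding m using conv_abs_is_moreau_envelope_iff[OF bspline_scaled_kernel[OF assms(2)]] by simp
qed

end
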